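(* There exists a structure $\langle M,\mathsf{S}\rangle$, with $M$ a set and $\mathsf{S}\subseteq M\times\mathcal{P}(M)$, that satisfies (S1), (S2), (S3), (S4), the condition ($\mathrm{S}\Sigma$): "for every $x\in M$ and every non-empty family $\mathcal{A}$ of subsets of $M$ with $x\,\mathsf{S}\,A$ for all $A\in\mathcal{A}$, one has $x\,\mathsf{S}\,\bigcup\mathcal{A}$", and the condition "for all $x,y\in M$, $x\,\mathsf{S}\,\{y\}$ implies $x=y$", but does not satisfy (S5).
   Context: For a set $M$ and a relation $\mathsf{S}\subseteq M\times\mathcal{P}(M)$ define: $x\sqsubseteq_{\mathsf{S}} y$ iff there is $X\subseteq M$ with $y\,\mathsf{S}\,X$ and $x\in X$; $\mathrm{I}(x)=\{y\in M\mid y\sqsubseteq_{\mathsf{S}} x\}$ and for $A\subseteq M$, $\mathrm{I}(A)=\bigcup_{a\in A}\mathrm{I}(a)$; $x$ s-overlaps $y$ iff there are $X,Y\subseteq M$ with $x\,\mathsf{S}\,X$, $y\,\mathsf{S}\,Y$, $X\cap Y\neq\emptyset$; a set $A\subseteq M$ is pre-dense in $B\subseteq M$ iff for every $b\in B$ there is $a\in A$ such that $a$ s-overlaps $b$. Axioms: (S1) for every non-empty $X\subseteq M$ there is $x\in M$ with $x\,\mathsf{S}\,X$; (S2) $x\,\mathsf{S}\,X\wedge y\,\mathsf{S}\,X\to x=y$; (S3) $x\,\mathsf{S}\,X\wedge y\,\mathsf{S}\,Y\wedge x\in Y\to y\,\mathsf{S}\,(X\cup Y)$; (S4) if $x\,\mathsf{S}\,X$,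 $x\,\mathsf{S}\,Y$ and $y\in Y$, then there are $z\in X$ and $Z,U\subseteq M$ with $z\,\mathsf{S}\,Z$, $y\,\mathsf{S}\,U$ and $Z\cap U\neq\emptyset$; (S5) for all $x\in M$ and $X\subseteq M$: if $X$ is pre-dense in $\mathrm{I}(x)$ then $x\,\mathsf{S}\,(\mathrm{I}(x)\cap\mathrm{I}(X))$. *)

theory Defs
  imports Main
begin

definition rel_on :: "'a set \<Rightarrow> ('a \<Rightarrow> 'a set \<Rightarrow> bool) \<Rightarrow> bool" where
  "rel_on M S \<longleftrightarrow> (\<forall>x X. S x X \<longrightarrow> x \<in> M \<and> X \<subseteq> M)"

definition below :: "'a set \<Rightarrow> ('a \<Rightarrow> 'a set \<Rightarrow> bool) \<Rightarrow> 'a \<Rightarrow> 'a \<Rightarrow> bool" where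
  "below M S x y \<longleftrightarrow> (\<exists>X. X \<subseteq> M \<and> S y X \<and> x \<in> X)"

definition Iel :: "'a set \<Rightarrow> ('a \<Rightarrow> 'a set \<Rightarrow> bool) \<Rightarrow> 'a \<Rightarrow> 'a set" where
  "Iel M S x = {y \<in> M. below M S y x}"

definition Iset :: "'a set \<Rightarrow> ('a \<Rightarrow> 'a set \<Rightarrow> bool) \<Rightarrow> 'a set \<Rightarrow> 'a set" where
  "Iset M S A = (\<Union>a\<in>A. Iel M S a)"

definition soverlaps :: "'a set \<Rightarrow> ('a \<Rightarrow> 'a set \<Rightarrow> bool) \<Rightarrow> 'a \<Rightarrow> 'a \<Rightarrow> bool" where
  "soverlaps M S x y \<longleftrightarrow> (\<exists>X Y. X \<subseteq> M \<and> Y \<subseteq> M \<and> S x X \<and> S y Y \<and> X \<inter> Y \<noteq> {})"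

definition predense :: "'a set \<Rightarrow> ('a \<Rightarrow> 'a set \<Rightarrow> bool) \<Rightarrow> 'a set \<Rightarrow> 'a set \<Rightarrow> bool" where
  "predense M S A B \<longleftrightarrow> (\<forall>b\<in>B. \<exists>a\<in>A. soverlaps M S a b)"

definition S1 :: "'a set \<Rightarrow> ('a \<Rightarrow> 'a set \<Rightarrow> bool) \<Rightarrow> bool" where
  "S1 M S \<longleftrightarrow> (\<forall>X. X \<subseteq> M \<and> X \<noteq> {} \<longrightarrow> (\<exists>x\<in>M. S x X))"

definition S2 :: "'a set \<Rightarrow> ('a \<Rightarrow> 'a set \<Rightarrow> bool) \<Rightarrow> bool" where
  "S2 M S \<longleftrightarrow> (\<forall>x\<in>M. \<forall>y\<in>M. \<forall>X. X \<subseteq> M \<longrightarrow> S x X \<and> S y X \<longrightarrow> x = y)"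

definition S3 :: "'a set \<Rightarrow> ('a \<Rightarrow> 'a set \<Rightarrow> bool) \<Rightarrow> bool" where
  "S3 M S \<longleftrightarrow> (\<forall>x\<in>M. \<forall>y\<in>M. \<forall>X Y. X \<subseteq> M \<and> Y \<subseteq> M \<longrightarrow>
      S x X \<and> S y Y \<and> x \<in> Y \<longrightarrow> S y (X \<union> Y))"

definition S4 :: "'a set \<Rightarrow> ('a \<Rightarrow> 'a set \<Rightarrow> bool) \<Rightarrow> bool" where
  "S4 M S \<longleftrightarrow> (\<forall>x\<in>M. \<forall>y\<in>M. \<forall>X Y. X \<subseteq> M \<and> Y \<subseteq> M \<longrightarrow>
      S x X \<and> S x Y \<and> y \<in> Y \<longrightarrow>
      (\<exists>z\<in>X. \<exists>Z U. Z \<subseteq> M \<and> U \<subseteq> M \<and> S z Z \<and> S y U \<and> Z \<inter> U \<noteq> {}))"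

definition S5 :: "'a set \<Rightarrow> ('a \<Rightarrow> 'a set \<Rightarrow> bool) \<Rightarrow> bool" where
  "S5 M S \<longleftrightarrow> (\<forall>x\<in>M. \<forall>X. X \<subseteq> M \<longrightarrow>
      predense M S X (Iel M S x) \<longrightarrow> S x (Iel M S x \<inter> Iset M S X))"

definition SSigma :: "'a set \<Rightarrow> ('a \<Rightarrow> 'a set \<Rightarrow> bool) \<Rightarrow> bool" where
  "SSigma M S \<longleftrightarrow> (\<forall>x\<in>M. \<forall>\<A>. \<A> \<subseteq> Pow M \<and> \<A> \<noteq> {} \<and> (\<forall>A\<in>\<A>. S x A) \<longrightarrow> S x (\<Union>\<A>))"

definition singleton_cond :: "'a set \<Rightarrow> ('a \<Rightarrow> 'a set \<Rightarrow> bool) \<Rightarrow> bool" where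
  "singleton_cond M S \<longleftrightarrow> (\<forall>x\<in>M. \<forall>y\<in>M. S x {y} \<longrightarrow> x = y)"

end

theory Submission
  imports Defs
begin

text \<open>Read x S X as "x is the largest element of X" on a finite chain. Maxima of unions are
  maxima of maxima, which gives (S1)--(S3), (S\<Sigma>) and the singleton condition; any two
  elements s-overlap through the bottom element, which gives (S4) and makes {\<bottom>} pre-dense
  everywhere. But I(\<bottom>) = {\<bottom>}, so (S5) would force every x to be the maximum of
  I(x) \<inter> I(\<bottom>) = {\<bottom>}, which fails as soon as the chain has two elements.\<close>

definition max_rel :: "'a::linorder set \<Rightarrow> 'a \<Rightarrow> 'a set \<Rightarrow> bool" where
  "max_rel M x X \<longleftrightarrow> X \<subseteq> M \<and> X \<noteq> {} \<and> x = Max X"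

context
  fixes M :: "'a::linorder set"
  assumes fin: "finite M"
begin

lemma max_rel_finite: "X \<subseteq> M \<Longrightarrow> finite X"
  using fin finite_subset by blast

lemma max_rel_in: "max_rel M x X \<Longrightarrow> x \<in> X"
  unfolding max_rel_def using max_rel_finite Max_in by blast

lemma rel_on_max_rel: "rel_on M (max_rel M)"
  unfolding rel_on_def using max_rel_in by (auto simp: max_rel_def)

lemma S1_max_rel: "S1 M (max_rel M)"
  unfolding S1_def max_rel_def using max_rel_finite Max_in by blast

lemma S2_max_rel: "S2 M (max_rel M)"
  unfolding S2_def max_rel_def by blast

lemma S3_max_rel: "S3 M (max_rel M)"
  unfolding S3_def
proof (intro ballI allI impI)
  fix x y X Y
  assume "X \<subseteq> M \<and> Y \<subseteq> M" and xy: "max_rel M x X \<and> max_rel M y Y \<and> x \<in> Y"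
  then have fin_XY: "finite X" "finite Y" using max_rel_finite by auto
  have "Max X \<le> Max Y"
    using xy fin_XY Max_ge unfolding max_rel_def by metis
  with xy fin_XY show "max_rel M y (X \<union> Y)"
    by (auto simp: max_rel_def Max_Un max_def)
qed

lemma SSigma_max_rel: "SSigma M (max_rel M)"
  unfolding SSigma_def
proof (intro ballI allI impI)
  fix x \<A>
  assume \<A>: "\<A> \<subseteq> Pow M \<and> \<A> \<noteq> {} \<and> (\<forall>A\<in>\<A>. max_rel M x A)"
  then have sub: "\<Union>\<A> \<subseteq> M" by auto
  from \<A> have x_in: "x \<in> \<Union>\<A>" using max_rel_in by blast
  have "y \<le> x" if "y \<in> \<Union>\<A>" for y
    using that \<A> max_rel_finite unfolding max_rel_def by (metis Max_ge PowD UnionE subsetD)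
  then have "Max (\<Union>\<A>) = x"
    using sub max_rel_finite x_in by (intro Max_eqI) auto
  then show "max_rel M x (\<Union>\<A>)"
    unfolding max_rel_def using sub x_in by auto
qed

lemma singleton_cond_max_rel: "singleton_cond M (max_rel M)"
  unfolding singleton_cond_def max_rel_def by auto

lemma soverlaps_max_rel:
  assumes "x \<in> M" "y \<in> M"
  shows "soverlaps M (max_rel M) x y"
proof -
  have "Min M \<in> M" "Min M \<le> x" "Min M \<le> y"
    using assms fin Min_in Min_le by blast+
  then have "max_rel M x {Min M, x}" "max_rel M y {Min M, y}"
    using assms by (auto simp: max_rel_def max_def)
  then show ?thesis
    unfolding soverlaps_def max_rel_def by blast
qed

lemma S4_max_rel: "S4 M (max_rel M)"
  unfolding S4_def
proof (intro ballI allI impI)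
  fix x y X Y
  assume XY: "X \<subseteq> M \<and> Y \<subseteq> M" and xy: "max_rel M x X \<and> max_rel M x Y \<and> y \<in> Y"
  then have "x \<in> X" "y \<in> M" using max_rel_in by auto
  with XY have "soverlaps M (max_rel M) x y"
    using soverlaps_max_rel by blast
  with \<open>x \<in> X\<close> show "\<exists>z\<in>X. \<exists>Z U. Z \<subseteq> M \<and> U \<subseteq> M \<and> max_rel M z Z \<and> max_rel M y U \<and> Z \<inter> U \<noteq> {}"
    unfolding soverlaps_def by blast
qed

lemma Iel_max_rel:
  assumes "x \<in> M"
  shows "Iel M (max_rel M) x = {y \<in> M. y \<le> x}"
proof -
  have "below M (max_rel M) y x" if "y \<in> M" "y \<le> x" for y
    using that assms unfolding below_def max_rel_def
    by (intro exI[of _ "{y, x}"]) (auto simp: max_def)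
  moreover have "y \<le> x" if "below M (max_rel M) y x" for y
    using that max_rel_finite unfolding below_def max_rel_def by auto
  ultimately show ?thesis
    unfolding Iel_def by blast
qed

lemma not_S5_max_rel:
  assumes "x \<in> M" "x \<noteq> Min M"
  shows "\<not> S5 M (max_rel M)"
proof
  assume S5: "S5 M (max_rel M)"
  have bot: "Min M \<in> M" "Min M \<le> x"
    using assms fin Min_in Min_le by blast+
  then have "predense M (max_rel M) {Min M} (Iel M (max_rel M) x)"
    unfolding predense_def Iel_def using soverlaps_max_rel by blast
  with S5 assms bot have "max_rel M x (Iel M (max_rel M) x \<inter> Iset M (max_rel M) {Min M})"
    unfolding S5_def by blast
  moreover have "Iel M (max_rel M) x \<inter> Iset M (max_rel M) {Min M} = {Min M}"
    using assms bot fin by (auto simp: Iset_def Iel_max_rel intro: antisym)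
  ultimately show False
    using assms by (simp add: max_rel_def)
qed

end

theorem mainTheorem11:
  shows "\<exists>(M :: nat set) S. rel_on M S \<and> S1 M S \<and> S2 M S \<and> S3 M S \<and> S4 M S \<and>
           SSigma M S \<and> singleton_cond M S \<and> \<not> S5 M S"
proof (intro exI conjI)
  let ?M = "{0, 1 :: nat}"
  have fin: "finite ?M" by simp
  show "rel_on ?M (max_rel ?M)" by (rule rel_on_max_rel[OF fin])
  show "S1 ?M (max_rel ?M)" by (rule S1_max_rel[OF fin])
  show "S2 ?M (max_rel ?M)" by (rule S2_max_rel[OF fin])
  show "S3 ?M (max_rel ?M)" by (rule S3_max_rel[OF fin])
  show "S4 ?M (max_rel ?M)" by (rule S4_max_rel[OF fin])
  show "SSigma ?M (max_rel ?M)" by (rule SSigma_max_rel[OF fin])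
  show "singleton_cond ?M (max_rel ?M)" by (rule singleton_cond_max_rel[OF fin])
  show "\<not> S5 ?M (max_rel ?M)" by (rule not_S5_max_rel[OF fin, of 1]) simp_all
qed

end
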